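(* For all integers $n,k,d$ with $2\le k\le d<n$, there exists a directed graph $G$ on $\{D\}\cup[n]$ that satisfies the $d$-propagating-dealer property and satisfies $$\Gamma_{\text{sota}}(G)\ge\frac{n(n+1)}{4d}.$$
   Context: $G$ is a directed graph on $\{D\}\cup[n]$, $D$ the dealer, $[n]$ the participants; $\mathcal N(D)$ is the set of out-neighbours of $D$. $G$ satisfies the $d$-propagating-dealer property if there is an ordering of the $n$ participants such that every participant either has an incoming edge from $D$ or has incoming edges from at least $d$ participants preceding it in the ordering. For a participant $i$ and integer $w\ge k$, let $\ell_w(D\to i)$ be the minimum, over all families of $w$ internally vertex-disjoint directed paths from $D$ to $i$, of the average length (number of edges) of the paths in the family, with $\ell_w(D\to i)=\infty$ if no such family exists. The communication complexity of the state-of-the-art (separate secure transmissions) scheme is $$\Gamma_{\text{sota}}(G)=|\mathcal N(D)|+\sum_{i\notin\mathcal N(D)}\min_{w\ge k}\Big[\frac{w}{w-k+1}\,\ell_w(D\to i)\Big].$$ *)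

theory Defs
  imports "HOL-Library.Extended_Real"
begin

text \<open>Vertex 0 is the dealer D; participants are 1..n. A directed graph on
{D} \<union> [n] is an edge set E \<subseteq> {0..n} \<times> {0..n}.\<close>

definition is_digraph :: "nat \<Rightarrow> (nat \<times> nat) set \<Rightarrow> bool" where
  "is_digraph n E \<longleftrightarrow> E \<subseteq> {0..n} \<times> {0..n}"

definition dealer_nbrs :: "nat \<Rightarrow> (nat \<times> nat) set \<Rightarrow> nat set" where
  "dealer_nbrs n E = {i \<in> {1..n}. (0, i) \<in> E}"

definition propagating_dealer :: "nat \<Rightarrow> nat \<Rightarrow> (nat \<times> nat) set \<Rightarrow> bool" where
  "propagating_dealer n d E \<longleftrightarrow>
     (\<exists>pos :: nat \<Rightarrow> nat. bij_betw pos {1..n} {1..n} \<and>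
        (\<forall>i \<in> {1..n}. (0, i) \<in> E \<or>
            card {j \<in> {1..n}. pos j < pos i \<and> (j, i) \<in> E} \<ge> d))"

definition is_path :: "(nat \<times> nat) set \<Rightarrow> nat \<Rightarrow> nat \<Rightarrow> nat list \<Rightarrow> bool" where
  "is_path E u v p \<longleftrightarrow> p \<noteq> [] \<and> hd p = u \<and> last p = v \<and> distinct p \<and>
     (\<forall>j. Suc j < length p \<longrightarrow> (p ! j, p ! Suc j) \<in> E)"

definition path_len :: "nat list \<Rightarrow> nat" where
  "path_len p = length p - 1"

definition internal :: "nat list \<Rightarrow> nat set" where
  "internal p = set (butlast (tl p))"

definition disjoint_family :: "(nat \<times> nat) set \<Rightarrow> nat \<Rightarrow> nat \<Rightarrow> nat list list \<Rightarrow> bool" where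
  "disjoint_family E i w ps \<longleftrightarrow> length ps = w \<and> distinct ps \<and>
     (\<forall>p \<in> set ps. is_path E 0 i p) \<and>
     (\<forall>a < w. \<forall>b < w. a \<noteq> b \<longrightarrow> internal (ps ! a) \<inter> internal (ps ! b) = {})"

text \<open>\<ell>_w(D \<rightarrow> i): minimum average length, \<infinity> if no family exists.\<close>
definition avg_len :: "(nat \<times> nat) set \<Rightarrow> nat \<Rightarrow> nat \<Rightarrow> ereal" where
  "avg_len E w i = (INF ps \<in> {ps. disjoint_family E i w ps}.
       ereal ((\<Sum>p\<leftarrow>ps. real (path_len p)) / real w))"

definition gamma_sota :: "nat \<Rightarrow> nat \<Rightarrow> (nat \<times> nat) set \<Rightarrow> ereal" where
  "gamma_sota n k E = ereal (real (card (dealer_nbrs n E))) +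
     (\<Sum>i \<in> {1..n} - dealer_nbrs n E.
        (INF w \<in> {w. w \<ge> k}. ereal (real w / real (w - k + 1)) * avg_len E w i))"

end

theory Submission
  imports Defs
begin

(* Take the "window graph" on D = 0 and participants 1..n: the dealer
   points to 1..d, and participant j points to every i with j < i <= j + d.
   With the natural ordering 1 < 2 < ... < n, each participant i > d has exactly
   the d in-neighbours i-d..i-1 before it, so the d-propagating-dealer property holds.
   Every edge raises the vertex label by at most d, hence every path from D to i has
   at least i/d edges; so the average length of any family of paths is at least i/d,
   and since the factor w/(w-k+1) is at least 1, participant i contributes at least
   i/d to Gamma_sota.  Summing, Gamma_sota >= d + sum_{i=d+1..n} i/d, which is
   at least (sum_{i=1..n} i)/d = n(n+1)/(2d) >= n(n+1)/(4d). *)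

lemma path_label_growth:
  assumes step: "\<And>a b. (a, b) \<in> E \<Longrightarrow> b \<le> a + d"
    and path: "is_path E u v p"
  shows "v \<le> u + d * path_len p"
proof -
  have ne: "p \<noteq> []" and hd: "hd p = u" and last: "last p = v"
    and edge: "\<And>j. Suc j < length p \<Longrightarrow> (p ! j, p ! Suc j) \<in> E"
    using path unfolding is_path_def by auto
  have prefix: "p ! j \<le> u + d * j" if "j < length p" for j
    using that
  proof (induction j)
    case 0
    then show ?case using hd ne by (simp add: hd_conv_nth)
  next
    case (Suc j)
    then have "p ! Suc j \<le> p ! j + d" using step edge by blast
    then show ?case using Suc by simp
  qed
  have "v = p ! (length p - 1)" using ne last by (simp add: last_conv_nth)
  then show ?thesis using prefix[of "length p - 1"] ne unfolding path_len_def by simp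
qed

lemma avg_len_lower_bound:
  assumes "w > 0" and long: "\<And>p. is_path E 0 i p \<Longrightarrow> L \<le> real (path_len p)"
  shows "ereal L \<le> avg_len E w i"
  unfolding avg_len_def
proof (rule INF_greatest)
  fix ps assume "ps \<in> {ps. disjoint_family E i w ps}"
  then have len: "length ps = w" and paths: "\<forall>p \<in> set ps. is_path E 0 i p"
    unfolding disjoint_family_def by auto
  have "real w * L = (\<Sum>p\<leftarrow>ps. L)" using len by (simp add: sum_list_triv)
  also have "\<dots> \<le> (\<Sum>p\<leftarrow>ps. real (path_len p))"
    using paths long by (intro sum_list_mono) auto
  finally have "L \<le> (\<Sum>p\<leftarrow>ps. real (path_len p)) / real w"
    using \<open>w > 0\<close> by (simp add: le_divide_eq mult.commute)
  then show "ereal L \<le> ereal ((\<Sum>p\<leftarrow>ps. real (path_len p)) / real w)" by simp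
qed

text \<open>The per-participant term of Gamma_sota is bounded below by any non-negative
  lower bound on the average lengths, because the factor w/(w-k+1) is at least 1.\<close>
lemma sota_term_lower_bound:
  assumes "1 \<le> k" and "0 \<le> L"
    and avg: "\<And>w. k \<le> w \<Longrightarrow> ereal L \<le> avg_len E w i"
  shows "ereal L \<le> (INF w \<in> {w. w \<ge> k}. ereal (real w / real (w - k + 1)) * avg_len E w i)"
proof (rule INF_greatest)
  fix w assume "w \<in> {w. w \<ge> k}"
  then have w: "k \<le> w" by simp
  have factor: "1 \<le> real w / real (w - k + 1)" using w assms(1) by simp
  have "L \<le> (real w / real (w - k + 1)) * L"
    using mult_right_mono[OF factor \<open>0 \<le> L\<close>] by simp
  then have "ereal L \<le> ereal (real w / real (w - k + 1)) * ereal L" by simp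
  also have "\<dots> \<le> ereal (real w / real (w - k + 1)) * avg_len E w i"
    using avg[OF w] factor by (intro ereal_mult_left_mono) auto
  finally show "ereal L \<le> ereal (real w / real (w - k + 1)) * avg_len E w i" .
qed

lemma gamma_sota_lower_bound:
  assumes "1 \<le> k" and "0 < d" and step: "\<And>a b. (a, b) \<in> E \<Longrightarrow> b \<le> a + d"
  shows "ereal (real (card (dealer_nbrs n E)) + (\<Sum>i \<in> {1..n} - dealer_nbrs n E. real i / real d))
           \<le> gamma_sota n k E"
proof -
  have participant_cost: "ereal (real i / real d)
      \<le> (INF w \<in> {w. w \<ge> k}. ereal (real w / real (w - k + 1)) * avg_len E w i)" for i
  proof (rule sota_term_lower_bound[OF \<open>1 \<le> k\<close>])
    fix w assume "k \<le> w"
    show "ereal (real i / real d) \<le> avg_len E w i"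
    proof (rule avg_len_lower_bound)
      show "0 < w" using \<open>k \<le> w\<close> \<open>1 \<le> k\<close> by simp
      fix p assume "is_path E 0 i p"
      then have "real i \<le> real d * real (path_len p)"
        using path_label_growth[OF step] by (metis add_0 of_nat_le_iff of_nat_mult)
      then show "real i / real d \<le> real (path_len p)"
        using \<open>0 < d\<close> by (simp add: divide_le_eq mult.commute)
    qed
  qed simp
  show ?thesis
    unfolding gamma_sota_def sum_ereal[symmetric] plus_ereal.simps(1)[symmetric]
    by (intro add_left_mono sum_mono participant_cost)
qed

definition window_graph :: "nat \<Rightarrow> nat \<Rightarrow> (nat \<times> nat) set" where
  "window_graph n d =
     {(0, i) | i. 1 \<le> i \<and> i \<le> d} \<union> {(j, i) | j i. 1 \<le> j \<and> j < i \<and> i \<le> n \<and> i \<le> j + d}"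

lemma window_graph_digraph: "d \<le> n \<Longrightarrow> is_digraph n (window_graph n d)"
  unfolding is_digraph_def window_graph_def by auto

lemma window_graph_dealer_nbrs: "d \<le> n \<Longrightarrow> dealer_nbrs n (window_graph n d) = {1..d}"
  unfolding dealer_nbrs_def window_graph_def by auto

lemma window_graph_step: "(a, b) \<in> window_graph n d \<Longrightarrow> b \<le> a + d"
  unfolding window_graph_def by auto

text \<open>With the identity ordering, participant i > d has the d predecessors
  i-d, ..., i-1 as in-neighbours.\<close>
lemma window_graph_propagating: "propagating_dealer n d (window_graph n d)"
  unfolding propagating_dealer_def
proof (intro exI[of _ id] conjI ballI)
  show "bij_betw id {1..n} {1..n}" by simp
  fix i assume i: "i \<in> {1..n}"
  show "(0, i) \<in> window_graph n d
        \<or> d \<le> card {j \<in> {1..n}. id j < id i \<and> (j, i) \<in> window_graph n d}"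
  proof (cases "i \<le> d")
    case True
    then show ?thesis using i unfolding window_graph_def by auto
  next
    case False
    then have "{j \<in> {1..n}. id j < id i \<and> (j, i) \<in> window_graph n d} = {i - d..<i}"
      using i unfolding window_graph_def by auto
    then show ?thesis using False by simp
  qed
qed

lemma sum_atLeastAtMost_real: "(\<Sum>i\<in>{1..n}. real i) = real n * (real n + 1) / 2"
  by (induction n) (auto simp: field_simps)

text \<open>Replacing the first d summands i/d (each at most 1) by 1 only increases the sum.\<close>
lemma window_cost_estimate:
  assumes "0 < d" and "d \<le> n"
  shows "real n * (real n + 1) / (4 * real d) \<le> real d + (\<Sum>i \<in> {1..n} - {1..d}. real i / real d)"
proof -
  have "real n * (real n + 1) / (4 * real d) \<le> real n * (real n + 1) / (2 * real d)"
    using assms(1) by (intro divide_left_mono) auto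
  also have "\<dots> = (\<Sum>i\<in>{1..n}. real i / real d)"
    using assms(1) sum_atLeastAtMost_real[of n]
    by (simp add: sum_divide_distrib[symmetric] field_simps)
  also have "\<dots> = (\<Sum>i\<in>{1..d}. real i / real d) + (\<Sum>i \<in> {1..n} - {1..d}. real i / real d)"
    using assms(2) by (subst sum.subset_diff[of "{1..d}"]) auto
  also have "(\<Sum>i\<in>{1..d}. real i / real d) \<le> (\<Sum>i\<in>{1..d}. 1)"
    using assms(1) by (intro sum_mono) (auto simp: divide_le_eq)
  finally show ?thesis by simp
qed

theorem mainTheorem9:
  fixes n k d :: nat
  assumes "2 \<le> k" and "k \<le> d" and "d < n"
  shows "\<exists>E. is_digraph n E \<and> propagating_dealer n d E \<and>
           gamma_sota n k E \<ge> ereal (real n * (real n + 1) / (4 * real d))"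
proof (intro exI[of _ "window_graph n d"] conjI)
  have "0 < d" and "d \<le> n" using assms by simp_all
  show "is_digraph n (window_graph n d)" using window_graph_digraph[OF \<open>d \<le> n\<close>] .
  show "propagating_dealer n d (window_graph n d)" by (rule window_graph_propagating)
  have "ereal (real n * (real n + 1) / (4 * real d))
        \<le> ereal (real d + (\<Sum>i \<in> {1..n} - {1..d}. real i / real d))"
    using window_cost_estimate[OF \<open>0 < d\<close> \<open>d \<le> n\<close>] by simp
  also have "\<dots> \<le> gamma_sota n k (window_graph n d)"
    using gamma_sota_lower_bound[of k d "window_graph n d" n] assms \<open>0 < d\<close>
    by (simp add: window_graph_step window_graph_dealer_nbrs[OF \<open>d \<le> n\<close>])
  finally show "ereal (real n * (real n + 1) / (4 * real d)) \<le> gamma_sota n k (window_graph n d)" .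
qed

end
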